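(* Let $f:2^V\to\mathbb{Z}_{\ge0}$ be a connectivity function, $W\subseteq V$, and $(C_1,C_2,C_3)$ a minimum $W$-improvement of arity 3. Then for every $i\in\{1,2,3\}$ it holds that $f(W\cup C_i)>f(W)/2$ and $f((V\setminus W)\cup C_i)>f(W)/2$.
   Context: A connectivity function $f:2^V\to\mathbb{Z}_{\ge0}$ ($V$ finite) satisfies $f(\emptyset)=0$, $f(X)=f(V\setminus X)$, and $f(X\cup Y)+f(X\cap Y)\le f(X)+f(Y)$. For $W\subseteq V$, a $W$-improvement is a tripartition $(C_1,C_2,C_3)$ of $V$ (pairwise disjoint, possibly empty, union $V$) with $f(C_i)<f(W)/2$, $f(C_i\cap W)<f(W)$, $f(C_i\cap(V\setminus W))<f(W)$ for each $i$. Its width is $\max_i f(C_i)$, its sum-width is $\sum_i f(C_i)$, and its arity is the number of nonempty $C_i$. A $W$-improvement is minimum if it has minimum width among all $W$-improvements, subject to that minimum arity, and subject to those minimum sum-width. *)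

theory Defs
  imports Complex_Main
begin

definition conn_fun :: "'a set \<Rightarrow> ('a set \<Rightarrow> nat) \<Rightarrow> bool" where
  "conn_fun V f \<longleftrightarrow> finite V \<and> f {} = 0
     \<and> (\<forall>X. X \<subseteq> V \<longrightarrow> f X = f (V - X))
     \<and> (\<forall>X Y. X \<subseteq> V \<longrightarrow> Y \<subseteq> V \<longrightarrow> f (X \<union> Y) + f (X \<inter> Y) \<le> f X + f Y)"

definition tripartition :: "'a set \<Rightarrow> 'a set \<times> 'a set \<times> 'a set \<Rightarrow> bool" where
  "tripartition V C \<longleftrightarrow> (case C of (C1, C2, C3) \<Rightarrow>
     C1 \<inter> C2 = {} \<and> C1 \<inter> C3 = {} \<and> C2 \<inter> C3 = {} \<and> C1 \<union> C2 \<union> C3 = V)"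

definition parts :: "'a set \<times> 'a set \<times> 'a set \<Rightarrow> 'a set list" where
  "parts C = (case C of (C1, C2, C3) \<Rightarrow> [C1, C2, C3])"

definition improvement :: "'a set \<Rightarrow> ('a set \<Rightarrow> nat) \<Rightarrow> 'a set \<Rightarrow> 'a set \<times> 'a set \<times> 'a set \<Rightarrow> bool" where
  "improvement V f W C \<longleftrightarrow> tripartition V C \<and>
     (\<forall>Ci \<in> set (parts C). real (f Ci) < real (f W) / 2 \<and> f (Ci \<inter> W) < f W
        \<and> f (Ci \<inter> (V - W)) < f W)"

definition width :: "('a set \<Rightarrow> nat) \<Rightarrow> 'a set \<times> 'a set \<times> 'a set \<Rightarrow> nat" where
  "width f C = (case C of (C1, C2, C3) \<Rightarrow> max (f C1) (max (f C2) (f C3)))"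

definition sum_width :: "('a set \<Rightarrow> nat) \<Rightarrow> 'a set \<times> 'a set \<times> 'a set \<Rightarrow> nat" where
  "sum_width f C = (case C of (C1, C2, C3) \<Rightarrow> f C1 + f C2 + f C3)"

definition arity :: "'a set \<times> 'a set \<times> 'a set \<Rightarrow> nat" where
  "arity C = length (filter (\<lambda>Ci. Ci \<noteq> {}) (parts C))"

definition min_improvement :: "'a set \<Rightarrow> ('a set \<Rightarrow> nat) \<Rightarrow> 'a set \<Rightarrow> 'a set \<times> 'a set \<times> 'a set \<Rightarrow> bool" where
  "min_improvement V f W C \<longleftrightarrow> improvement V f W C
     \<and> (\<forall>D. improvement V f W D \<longrightarrow> width f C \<le> width f D)
     \<and> (\<forall>D. improvement V f W D \<and> width f D = width f C \<longrightarrow> arity C \<le> arity D)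
     \<and> (\<forall>D. improvement V f W D \<and> width f D = width f C \<and> arity D = arity C
            \<longrightarrow> sum_width f C \<le> sum_width f D)"

end

theory Submission
  imports Defs
begin

text \<open>If a part \<open>C\<close> of a minimum improvement had \<open>f (W - C) < f W\<close> and
  \<open>f ((V - W) - C) < f W\<close>, then \<open>(C, V - C, {})\<close> would be an improvement of no larger width
  and arity at most 2. So one of these two values is at least \<open>f W\<close>. By symmetry of \<open>f\<close>,
  \<open>f (W - C) = f ((V - W) \<union> C)\<close>, and submodularity applied to \<open>W \<union> C\<close> and \<open>V - C\<close> gives
  \<open>f (W - C) \<le> f (W \<union> C) + f C\<close>, and likewise with \<open>V - W\<close> for \<open>W\<close>. Since \<open>f C < f W / 2\<close>,
  both \<open>f (W \<union> C)\<close> and \<open>f ((V - W) \<union> C)\<close> exceed \<open>f W / 2\<close>.\<close>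

lemma conn_fun_compl: "conn_fun V f \<Longrightarrow> X \<subseteq> V \<Longrightarrow> f (V - X) = f X"
  unfolding conn_fun_def by metis

lemma conn_fun_submod:
  "conn_fun V f \<Longrightarrow> X \<subseteq> V \<Longrightarrow> Y \<subseteq> V \<Longrightarrow> f (X \<union> Y) + f (X \<inter> Y) \<le> f X + f Y"
  unfolding conn_fun_def by blast

lemma conn_fun_empty: "conn_fun V f \<Longrightarrow> f {} = 0"
  unfolding conn_fun_def by blast

lemma conn_fun_top: "conn_fun V f \<Longrightarrow> f V = 0"
  using conn_fun_compl[of V f V] conn_fun_empty[of V f] by simp

lemma conn_fun_diff_compl:
  assumes "conn_fun V f" "X \<subseteq> V" "C \<subseteq> V"
  shows "f (X - C) = f ((V - X) \<union> C)"
proof -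
  have "V - (X - C) = (V - X) \<union> C" using assms(3) by blast
  moreover have "X - C \<subseteq> V" using assms(2) by blast
  ultimately show ?thesis using conn_fun_compl[OF assms(1), of "X - C"] by simp
qed

lemma conn_fun_diff_le:
  assumes cf: "conn_fun V f" and "X \<subseteq> V" "C \<subseteq> V"
  shows "f (X - C) \<le> f (X \<union> C) + f C"
proof -
  have "(X \<union> C) \<union> (V - C) = V" "(X \<union> C) \<inter> (V - C) = X - C" using assms by auto
  then show ?thesis
    using conn_fun_submod[OF cf, of "X \<union> C" "V - C"] conn_fun_top[OF cf]
      conn_fun_compl[OF cf \<open>C \<subseteq> V\<close>] assms by auto
qed

lemma conn_fun_union_gt_half:
  assumes cf: "conn_fun V f" and W: "W \<subseteq> V" and C: "C \<subseteq> V"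
    and small: "real (f C) < real (f W) / 2"
    and large: "f W \<le> f (W - C) \<or> f W \<le> f ((V - W) - C)"
  shows "real (f (W \<union> C)) > real (f W) / 2 \<and> real (f ((V - W) \<union> C)) > real (f W) / 2"
proof -
  have "f (W - C) \<le> f (W \<union> C) + f C" "f ((V - W) - C) \<le> f ((V - W) \<union> C) + f C"
    using conn_fun_diff_le[OF cf] W C by auto
  moreover have "f (W - C) = f ((V - W) \<union> C)" "f ((V - W) - C) = f (W \<union> C)"
    using conn_fun_diff_compl[OF cf] W C by (auto simp: double_diff)
  ultimately show ?thesis using small large by linarith
qed

lemma part_subset: "tripartition V C \<Longrightarrow> Ci \<in> set (parts C) \<Longrightarrow> Ci \<subseteq> V"
  unfolding tripartition_def parts_def by (cases C) auto

lemma part_le_width: "Ci \<in> set (parts C) \<Longrightarrow> f Ci \<le> width f C"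
  unfolding parts_def width_def by (cases C) auto

lemma arity_bipartition: "arity (A, B, {}) \<le> 2"
  unfolding arity_def parts_def by simp

lemma width_bipartition: "conn_fun V f \<Longrightarrow> A \<subseteq> V \<Longrightarrow> width f (A, V - A, {}) = f A"
  unfolding width_def using conn_fun_compl conn_fun_empty by fastforce

lemma improvement_bipartition:
  assumes cf: "conn_fun V f" and W: "W \<subseteq> V" and A: "A \<subseteq> V"
    and "real (f A) < real (f W) / 2" "f (A \<inter> W) < f W" "f (A \<inter> (V - W)) < f W"
    and "f (W - A) < f W" "f ((V - W) - A) < f W"
  shows "improvement V f W (A, V - A, {})"
proof -
  have "(V - A) \<inter> W = W - A" "(V - A) \<inter> (V - W) = (V - W) - A" using W by auto
  then show ?thesis
    unfolding improvement_def tripartition_def parts_def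
    using assms conn_fun_compl[OF cf A] conn_fun_empty[OF cf] by auto
qed

lemma min_improvement_part_diff_large:
  assumes cf: "conn_fun V f" and W: "W \<subseteq> V"
    and min: "min_improvement V f W C" and arity: "arity C = 3"
    and Ci: "Ci \<in> set (parts C)"
  shows "f W \<le> f (W - Ci) \<or> f W \<le> f ((V - W) - Ci)"
proof (rule ccontr)
  assume small_diffs: "\<not> (f W \<le> f (W - Ci) \<or> f W \<le> f ((V - W) - Ci))"
  have impr: "improvement V f W C" using min unfolding min_improvement_def by blast
  then have CiV: "Ci \<subseteq> V" using Ci part_subset unfolding improvement_def by blast
  let ?D = "(Ci, V - Ci, {})"
  have "improvement V f W ?D"
    using improvement_bipartition[OF cf W CiV] impr Ci small_diffs
    unfolding improvement_def by auto
  moreover have "width f ?D \<le> width f C"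
    using width_bipartition[OF cf CiV] part_le_width[OF Ci] by simp
  ultimately have "arity C \<le> arity ?D"
    using min unfolding min_improvement_def by (metis order_antisym)
  then show False using arity arity_bipartition[of Ci "V - Ci"] by simp
qed

theorem lemma8:
  fixes V W :: "'a set" and f :: "'a set \<Rightarrow> nat" and C1 C2 C3 :: "'a set"
  assumes "conn_fun V f"
    and "W \<subseteq> V"
    and "min_improvement V f W (C1, C2, C3)"
    and "arity (C1, C2, C3) = 3"
  shows "\<forall>Ci \<in> {C1, C2, C3}. real (f (W \<union> Ci)) > real (f W) / 2
            \<and> real (f ((V - W) \<union> Ci)) > real (f W) / 2"
proof
  fix Ci assume "Ci \<in> {C1, C2, C3}"
  then have Ci: "Ci \<in> set (parts (C1, C2, C3))" unfolding parts_def by auto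
  have impr: "improvement V f W (C1, C2, C3)"
    using assms(3) unfolding min_improvement_def by blast
  then have "Ci \<subseteq> V" "real (f Ci) < real (f W) / 2"
    using part_subset Ci unfolding improvement_def by blast+
  with conn_fun_union_gt_half[OF assms(1,2)] min_improvement_part_diff_large[OF assms Ci]
  show "real (f (W \<union> Ci)) > real (f W) / 2 \<and> real (f ((V - W) \<union> Ci)) > real (f W) / 2"
    by blast
qed

end
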